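(* Let $\tau$ be a vocabulary. For every formula $\phi$ of $\mathcal{D}(\mathsf{M})[\tau]$ with free variables $\mathrm{Fr}(\phi)=\{y_1,\dots,y_n\}$ there is a sentence $\psi$ of $\mathrm{SO}(\mathsf{Most}_f)$ over the vocabulary $\tau\cup\{S\}$, where $S$ is a new $n$-ary relation symbol, such that for every finite $\tau$-structure $\mathfrak A$ and every team $X$ over $\mathfrak A$ with $\mathrm{dom}(X)=\mathrm{Fr}(\phi)$: $$\mathfrak A\models_X\phi\iff(\mathfrak A,\mathrm{rel}(X))\models\psi,$$ where $S$ is interpreted by $\mathrm{rel}(X)$.
   Context: All structures are finite. Dependence logic with majority, $\mathcal{D}(\mathsf{M})[\tau]$: formulas over a vocabulary $\tau$ in negation normal form, built from first-order literals (atomic formulas and negated atomic formulas), dependence atoms $=\!(t_1,\dots,t_n)$ ($t_i$ terms) and their negations $\neg=\!(t_1,\dots,t_n)$, using $\wedge$, $\vee$, $\exists x$, $\forall x$ and $\mathsf{M}x$. $\mathrm{Fr}(\phi)$ denotes the set of free variables, defined as in first-order logic ($\mathsf{M}x$ binds $x$), where the free variables of $=\!(t_1,\dots,t_n)$ are all variables occurring in $t_1,\dots,t_n$. A team $X$ over a structure $\mathfrak A$ with domain $A$ and with finite variable domain $\mathrm{dom}(X)$ is a set of assignments $s:\mathrm{dom}(X)\to A$. If $\mathrm{dom}(X)=\{y_1,\dots,y_n\}$ (in this fixed order), $\mathrm{rel}(X)=\{(s(y_1),\dots,s(y_n)):s\in X\}\subseteq A^n$. For $F:X\to A$ let $X(F/x)=\{s(F(s)/x):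 s\in X\}$ and $X(A/x)=\{s(a/x): s\in X, a\in A\}$, where $s(a/x)$ agrees with $s$ except that it maps $x$ to $a$. Satisfaction $\mathfrak A\models_X\phi$ (for teams whose domain contains the free variables of $\phi$): for a first-order literal, every $s\in X$ satisfies it in the usual sense; $\mathfrak A\models_X =\!(t_1,\dots,t_n)$ iff any $s,s'\in X$ giving equal values to $t_1,\dots,t_{n-1}$ give equal values to $t_n$ ($=\!()$ is always true); $\mathfrak A\models_X\neg=\!(t_1,\dots,t_n)$ iff $X=\emptyset$; $\mathfrak A\models_X\psi\wedge\chi$ iff both hold; $\mathfrak A\models_X\psi\vee\chi$ iff $X=Y\cup Z$ with $\mathfrak A\models_Y\psi$ and $\mathfrak A\models_Z\chi$; $\mathfrak A\models_X\exists x\psi$ iff $\mathfrak A\models_{X(F/x)}\psi$ for some $F:X\to A$; $\mathfrak A\models_X\forall x\psi$ iff $\mathfrak A\models_{X(A/x)}\psi$; $\mathfrak A\models_X\mathsf{M}x\psi$ iff for at least $|A|^{|X|}/2$ many functions $F:X\to A$ we have $\mathfrak A\models_{X(F/x)}\psi$. For $k\ge1$, the quantifier $\mathsf{Most}^k_f$ binds a $k$-ary function symbol $g$: for $|A|=n$, $\mathfrak A\models\mathsf{Most}^k_f g\,\phi(g)$ iff $|\{f:A^k\to A\mid\mathfrak A\models\phi(f)\}|\ge n^{n^k}/2$. $\mathrm{SO}(\mathsf{Most}_f)$ is second-order logic extended with $\mathsf{Most}^k_f$ for all $k\ge1$. *)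

theory Defs
  imports Main "HOL-Library.FuncSet"
begin

text \<open>A vocabulary tau is given by relation symbols of type 'r with arities arR and
function symbols of type 'f with arities arF (constants have arity 0).
First-order variables are natural numbers.\<close>

datatype 'f trm = Var nat | Fun 'f "'f trm list"

datatype ('r, 'f) dm =
    DEq "'f trm" "'f trm"
  | DNEq "'f trm" "'f trm"
  | DRel 'r "'f trm list"
  | DNRel 'r "'f trm list"
  | DDep "'f trm list"
  | DNDep "'f trm list"
  | DAnd "('r, 'f) dm" "('r, 'f) dm"
  | DOr "('r, 'f) dm" "('r, 'f) dm"
  | DEx nat "('r, 'f) dm"
  | DAll nat "('r, 'f) dm"
  | DMost nat "('r, 'f) dm"

fun trm_vars :: "'f trm \<Rightarrow> nat set" where
  "trm_vars (Var x) = {x}"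
| "trm_vars (Fun f ts) = \<Union> (set (map trm_vars ts))"

fun trm_wf :: "('f \<Rightarrow> nat) \<Rightarrow> 'f trm \<Rightarrow> bool" where
  "trm_wf arF (Var x) = True"
| "trm_wf arF (Fun f ts) = (length ts = arF f \<and> (\<forall>t\<in>set ts. trm_wf arF t))"

fun dm_fr :: "('r, 'f) dm \<Rightarrow> nat set" where
  "dm_fr (DEq t u) = trm_vars t \<union> trm_vars u"
| "dm_fr (DNEq t u) = trm_vars t \<union> trm_vars u"
| "dm_fr (DRel R ts) = \<Union> (set (map trm_vars ts))"
| "dm_fr (DNRel R ts) = \<Union> (set (map trm_vars ts))"
| "dm_fr (DDep ts) = \<Union> (set (map trm_vars ts))"
| "dm_fr (DNDep ts) = \<Union> (set (map trm_vars ts))"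
| "dm_fr (DAnd p q) = dm_fr p \<union> dm_fr q"
| "dm_fr (DOr p q) = dm_fr p \<union> dm_fr q"
| "dm_fr (DEx x p) = dm_fr p - {x}"
| "dm_fr (DAll x p) = dm_fr p - {x}"
| "dm_fr (DMost x p) = dm_fr p - {x}"

fun dm_wf :: "('r \<Rightarrow> nat) \<Rightarrow> ('f \<Rightarrow> nat) \<Rightarrow> ('r, 'f) dm \<Rightarrow> bool" where
  "dm_wf arR arF (DEq t u) = (trm_wf arF t \<and> trm_wf arF u)"
| "dm_wf arR arF (DNEq t u) = (trm_wf arF t \<and> trm_wf arF u)"
| "dm_wf arR arF (DRel R ts) = (length ts = arR R \<and> (\<forall>t\<in>set ts. trm_wf arF t))"
| "dm_wf arR arF (DNRel R ts) = (length ts = arR R \<and> (\<forall>t\<in>set ts. trm_wf arF t))"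
| "dm_wf arR arF (DDep ts) = (\<forall>t\<in>set ts. trm_wf arF t)"
| "dm_wf arR arF (DNDep ts) = (\<forall>t\<in>set ts. trm_wf arF t)"
| "dm_wf arR arF (DAnd p q) = (dm_wf arR arF p \<and> dm_wf arR arF q)"
| "dm_wf arR arF (DOr p q) = (dm_wf arR arF p \<and> dm_wf arR arF q)"
| "dm_wf arR arF (DEx x p) = dm_wf arR arF p"
| "dm_wf arR arF (DAll x p) = dm_wf arR arF p"
| "dm_wf arR arF (DMost x p) = dm_wf arR arF p"

text \<open>Finite tau-structure with domain A (elements represented by naturals),
relation interpretation RI and function interpretation FI.\<close>
definition is_structure :: "('f \<Rightarrow> nat) \<Rightarrow> 'a set \<Rightarrow> ('f \<Rightarrow> 'a list \<Rightarrow> 'a) \<Rightarrow> bool" where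
  "is_structure arF A FI \<longleftrightarrow> finite A \<and> A \<noteq> {} \<and>
     (\<forall>f xs. length xs = arF f \<and> set xs \<subseteq> A \<longrightarrow> FI f xs \<in> A)"

definition is_team :: "'a set \<Rightarrow> nat set \<Rightarrow> (nat \<rightharpoonup> 'a) set \<Rightarrow> bool" where
  "is_team A V X \<longleftrightarrow> finite V \<and> (\<forall>s\<in>X. dom s = V \<and> ran s \<subseteq> A)"

fun trm_eval :: "('f \<Rightarrow> 'a list \<Rightarrow> 'a) \<Rightarrow> (nat \<rightharpoonup> 'a) \<Rightarrow> 'f trm \<Rightarrow> 'a" where
  "trm_eval FI s (Var x) = the (s x)"
| "trm_eval FI s (Fun f ts) = FI f (map (trm_eval FI s) ts)"

definition team_sup :: "(nat \<rightharpoonup> 'a) set \<Rightarrow> ((nat \<rightharpoonup> 'a) \<Rightarrow> 'a) \<Rightarrow> nat \<Rightarrow> (nat \<rightharpoonup> 'a) set" where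
  "team_sup X F x = (\<lambda>s. s(x \<mapsto> F s)) ` X"

definition team_dup :: "(nat \<rightharpoonup> 'a) set \<Rightarrow> 'a set \<Rightarrow> nat \<Rightarrow> (nat \<rightharpoonup> 'a) set" where
  "team_dup X A x = {s(x \<mapsto> a) | s a. s \<in> X \<and> a \<in> A}"

fun dm_sat :: "'a set \<Rightarrow> ('r \<Rightarrow> 'a list \<Rightarrow> bool) \<Rightarrow> ('f \<Rightarrow> 'a list \<Rightarrow> 'a)
    \<Rightarrow> (nat \<rightharpoonup> 'a) set \<Rightarrow> ('r, 'f) dm \<Rightarrow> bool" where
  "dm_sat A RI FI X (DEq t u) = (\<forall>s\<in>X. trm_eval FI s t = trm_eval FI s u)"
| "dm_sat A RI FI X (DNEq t u) = (\<forall>s\<in>X. trm_eval FI s t \<noteq> trm_eval FI s u)"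
| "dm_sat A RI FI X (DRel R ts) = (\<forall>s\<in>X. RI R (map (trm_eval FI s) ts))"
| "dm_sat A RI FI X (DNRel R ts) = (\<forall>s\<in>X. \<not> RI R (map (trm_eval FI s) ts))"
| "dm_sat A RI FI X (DDep ts) = (ts = [] \<or>
     (\<forall>s\<in>X. \<forall>s'\<in>X. map (trm_eval FI s) (butlast ts) = map (trm_eval FI s') (butlast ts)
        \<longrightarrow> trm_eval FI s (last ts) = trm_eval FI s' (last ts)))"
| "dm_sat A RI FI X (DNDep ts) = (X = {})"
| "dm_sat A RI FI X (DAnd p q) = (dm_sat A RI FI X p \<and> dm_sat A RI FI X q)"
| "dm_sat A RI FI X (DOr p q) =
     (\<exists>Y Z. X = Y \<union> Z \<and> dm_sat A RI FI Y p \<and> dm_sat A RI FI Z q)"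
| "dm_sat A RI FI X (DEx x p) = (\<exists>F \<in> X \<rightarrow>\<^sub>E A. dm_sat A RI FI (team_sup X F x) p)"
| "dm_sat A RI FI X (DAll x p) = dm_sat A RI FI (team_dup X A x) p"
| "dm_sat A RI FI X (DMost x p) =
     (card A ^ card X \<le> 2 * card {F \<in> X \<rightarrow>\<^sub>E A. dm_sat A RI FI (team_sup X F x) p})"

text \<open>rel(X) with respect to the fixed enumeration ys of dom(X).\<close>
definition team_rel :: "nat list \<Rightarrow> (nat \<rightharpoonup> 'a) set \<Rightarrow> 'a list set" where
  "team_rel ys X = (\<lambda>s. map (\<lambda>y. the (s y)) ys) ` X"

datatype 'f sotrm = SVar nat | SFun 'f "'f sotrm list" | SFVar nat "'f sotrm list"

datatype ('r, 'f) so =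
    SEq "'f sotrm" "'f sotrm"
  | SRel 'r "'f sotrm list"
  | SS "'f sotrm list"               (* the new relation symbol S *)
  | SRVar nat "'f sotrm list"
  | SNot "('r, 'f) so"
  | SAnd "('r, 'f) so" "('r, 'f) so"
  | SEx nat "('r, 'f) so"
  | SExR nat nat "('r, 'f) so"
  | SExF nat nat "('r, 'f) so"
  | SMostF nat nat "('r, 'f) so"     (* Most^k_f g, binding function variable g of arity k *)

fun sotrm_wf :: "('f \<Rightarrow> nat) \<Rightarrow> (nat \<rightharpoonup> nat) \<Rightarrow> nat set \<Rightarrow> 'f sotrm \<Rightarrow> bool" where
  "sotrm_wf arF GF V (SVar x) = (x \<in> V)"
| "sotrm_wf arF GF V (SFun f ts) = (length ts = arF f \<and> (\<forall>t\<in>set ts. sotrm_wf arF GF V t))"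
| "sotrm_wf arF GF V (SFVar g ts) = (GF g = Some (length ts) \<and> (\<forall>t\<in>set ts. sotrm_wf arF GF V t))"

text \<open>Well-formedness over tau plus an n-ary S, with all first-order, relation and
function variables bound (arity contexts GR, GF).\<close>
fun so_wf :: "('r \<Rightarrow> nat) \<Rightarrow> ('f \<Rightarrow> nat) \<Rightarrow> nat \<Rightarrow> (nat \<rightharpoonup> nat) \<Rightarrow> (nat \<rightharpoonup> nat)
    \<Rightarrow> nat set \<Rightarrow> ('r, 'f) so \<Rightarrow> bool" where
  "so_wf arR arF n GR GF V (SEq t u) = (sotrm_wf arF GF V t \<and> sotrm_wf arF GF V u)"
| "so_wf arR arF n GR GF V (SRel R ts) = (length ts = arR R \<and> (\<forall>t\<in>set ts. sotrm_wf arF GF V t))"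
| "so_wf arR arF n GR GF V (SS ts) = (length ts = n \<and> (\<forall>t\<in>set ts. sotrm_wf arF GF V t))"
| "so_wf arR arF n GR GF V (SRVar P ts) = (GR P = Some (length ts) \<and> (\<forall>t\<in>set ts. sotrm_wf arF GF V t))"
| "so_wf arR arF n GR GF V (SNot p) = so_wf arR arF n GR GF V p"
| "so_wf arR arF n GR GF V (SAnd p q) = (so_wf arR arF n GR GF V p \<and> so_wf arR arF n GR GF V q)"
| "so_wf arR arF n GR GF V (SEx x p) = so_wf arR arF n GR GF (insert x V) p"
| "so_wf arR arF n GR GF V (SExR P k p) = so_wf arR arF n (GR(P \<mapsto> k)) GF V p"
| "so_wf arR arF n GR GF V (SExF g k p) = so_wf arR arF n GR (GF(g \<mapsto> k)) V p"
| "so_wf arR arF n GR GF V (SMostF g k p) = (1 \<le> k \<and> so_wf arR arF n GR (GF(g \<mapsto> k)) V p)"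

definition so_sentence :: "('r \<Rightarrow> nat) \<Rightarrow> ('f \<Rightarrow> nat) \<Rightarrow> nat \<Rightarrow> ('r, 'f) so \<Rightarrow> bool" where
  "so_sentence arR arF n p = so_wf arR arF n Map.empty Map.empty {} p"

definition tuples :: "'a set \<Rightarrow> nat \<Rightarrow> 'a list set" where
  "tuples A k = {xs. length xs = k \<and> set xs \<subseteq> A}"

fun sotrm_eval :: "('f \<Rightarrow> 'a list \<Rightarrow> 'a) \<Rightarrow> (nat \<Rightarrow> 'a) \<Rightarrow> (nat \<Rightarrow> 'a list \<Rightarrow> 'a)
    \<Rightarrow> 'f sotrm \<Rightarrow> 'a" where
  "sotrm_eval FI e fe (SVar x) = e x"
| "sotrm_eval FI e fe (SFun f ts) = FI f (map (sotrm_eval FI e fe) ts)"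
| "sotrm_eval FI e fe (SFVar g ts) = fe g (map (sotrm_eval FI e fe) ts)"

text \<open>Satisfaction in the structure (A, RI, FI) expanded by S := SI, under
first-order env e, relation-variable env re, function-variable env fe.\<close>
fun so_sat :: "'a set \<Rightarrow> ('r \<Rightarrow> 'a list \<Rightarrow> bool) \<Rightarrow> ('f \<Rightarrow> 'a list \<Rightarrow> 'a) \<Rightarrow> 'a list set
    \<Rightarrow> (nat \<Rightarrow> 'a) \<Rightarrow> (nat \<Rightarrow> 'a list set) \<Rightarrow> (nat \<Rightarrow> 'a list \<Rightarrow> 'a) \<Rightarrow> ('r, 'f) so \<Rightarrow> bool" where
  "so_sat A RI FI SI e re fe (SEq t u) = (sotrm_eval FI e fe t = sotrm_eval FI e fe u)"
| "so_sat A RI FI SI e re fe (SRel R ts) = RI R (map (sotrm_eval FI e fe) ts)"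
| "so_sat A RI FI SI e re fe (SS ts) = (map (sotrm_eval FI e fe) ts \<in> SI)"
| "so_sat A RI FI SI e re fe (SRVar P ts) = (map (sotrm_eval FI e fe) ts \<in> re P)"
| "so_sat A RI FI SI e re fe (SNot p) = (\<not> so_sat A RI FI SI e re fe p)"
| "so_sat A RI FI SI e re fe (SAnd p q) = (so_sat A RI FI SI e re fe p \<and> so_sat A RI FI SI e re fe q)"
| "so_sat A RI FI SI e re fe (SEx x p) = (\<exists>a\<in>A. so_sat A RI FI SI (e(x := a)) re fe p)"
| "so_sat A RI FI SI e re fe (SExR P k p) =
     (\<exists>Q \<subseteq> tuples A k. so_sat A RI FI SI e (re(P := Q)) fe p)"
| "so_sat A RI FI SI e re fe (SExF g k p) =
     (\<exists>f \<in> tuples A k \<rightarrow>\<^sub>E A. so_sat A RI FI SI e re (fe(g := f)) p)"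
| "so_sat A RI FI SI e re fe (SMostF g k p) =
     (card A ^ (card A ^ k) \<le> 2 * card {f \<in> tuples A k \<rightarrow>\<^sub>E A. so_sat A RI FI SI e re (fe(g := f)) p})"

definition so_models :: "'a set \<Rightarrow> ('r \<Rightarrow> 'a list \<Rightarrow> bool) \<Rightarrow> ('f \<Rightarrow> 'a list \<Rightarrow> 'a)
    \<Rightarrow> 'a list set \<Rightarrow> ('r, 'f) so \<Rightarrow> bool" where
  "so_models A RI FI SI p = so_sat A RI FI SI (\<lambda>_. undefined) (\<lambda>_. {}) (\<lambda>_ _. undefined) p"

end

theory Submission
  imports Defs
begin

text \<open>A team X is represented by the relation rel(X), held in a relation variable, and the
  translation follows the team semantics clause by clause: literals and dependence atoms
  quantify over the tuples of the relation, a disjunction guesses two relations whose union is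
  the current one, and a universal quantifier defines the relation of the duplicated team.
  An existential or majority quantifier ranges over the functions F from X to A. These are
  simulated by second-order functions g on tuples, padded by one extra quantified argument c so
  that the arity is positive as Most requires. Restricting g to the padded tuples of X maps the
  functions g onto the functions F with fibres of equal size, so both the existence and the
  majority of good functions are preserved.\<close>

section \<open>Derived second-order connectives\<close>

definition so_imp :: "('r, 'f) so \<Rightarrow> ('r, 'f) so \<Rightarrow> ('r, 'f) so" where
  "so_imp p q = SNot (SAnd p (SNot q))"

definition so_iff :: "('r, 'f) so \<Rightarrow> ('r, 'f) so \<Rightarrow> ('r, 'f) so" where
  "so_iff p q = SAnd (so_imp p q) (so_imp q p)"

definition so_or :: "('r, 'f) so \<Rightarrow> ('r, 'f) so \<Rightarrow> ('r, 'f) so" where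
  "so_or p q = SNot (SAnd (SNot p) (SNot q))"

definition so_true :: "('r, 'f) so" where
  "so_true = SEx 0 (SEq (SVar 0) (SVar 0))"

fun so_conj :: "('r, 'f) so list \<Rightarrow> ('r, 'f) so" where
  "so_conj [] = so_true"
| "so_conj (p # ps) = SAnd p (so_conj ps)"

fun so_exs :: "nat \<Rightarrow> nat \<Rightarrow> ('r, 'f) so \<Rightarrow> ('r, 'f) so" where
  "so_exs off 0 p = p"
| "so_exs off (Suc k) p = SEx off (so_exs (Suc off) k p)"

declare so_exs.simps [simp del]

definition so_alls :: "nat \<Rightarrow> nat \<Rightarrow> ('r, 'f) so \<Rightarrow> ('r, 'f) so" where
  "so_alls off k p = SNot (so_exs off k (SNot p))"

definition so_vars :: "nat \<Rightarrow> nat \<Rightarrow> 'f sotrm list" where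
  "so_vars off k = map SVar [off..<off + k]"

definition so_defines :: "nat \<Rightarrow> nat \<Rightarrow> ('r, 'f) so \<Rightarrow> ('r, 'f) so" where
  "so_defines P k p = so_alls 0 k (so_iff (SRVar P (so_vars 0 k)) p)"

definition env_upds :: "(nat \<Rightarrow> 'a) \<Rightarrow> nat \<Rightarrow> 'a list \<Rightarrow> nat \<Rightarrow> 'a" where
  "env_upds e off vs x = (if off \<le> x \<and> x < off + length vs then vs ! (x - off) else e x)"

lemma env_upds_Nil [simp]: "env_upds e off [] = e"
  by (rule ext) (auto simp: env_upds_def)

lemma env_upds_Cons: "env_upds e off (a # vs) = env_upds (e(off := a)) (Suc off) vs"
  by (rule ext) (auto simp: env_upds_def nth_Cons' Suc_diff_Suc)

lemma env_upds_in [simp]: "i < length vs \<Longrightarrow> env_upds e off vs (off + i) = vs ! i"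
  by (simp add: env_upds_def)

lemma env_upds_append: "length us = m \<Longrightarrow> env_upds (env_upds e 0 us) m vs = env_upds e 0 (us @ vs)"
  by (rule ext) (auto simp: env_upds_def nth_append)

lemma map_eval_so_vars [simp]:
  "length vs = k \<Longrightarrow> map (sotrm_eval FI (env_upds e off vs) fe) (so_vars off k) = vs"
  by (auto simp: so_vars_def intro!: nth_equalityI)

lemma map_eval_so_vars_append:
  "length vs = k \<Longrightarrow> map (sotrm_eval FI (env_upds e 0 (us @ vs)) fe) (so_vars (length us) k) = vs"
  using map_eval_so_vars[of vs k FI "env_upds e 0 us" "length us" fe] by (simp add: env_upds_append)

lemma length_so_vars [simp]: "length (so_vars off k) = k"
  by (simp add: so_vars_def)

lemma bex_tuples_Suc:
  "(\<exists>vs\<in>tuples A (Suc k). P vs) \<longleftrightarrow> (\<exists>a\<in>A. \<exists>vs\<in>tuples A k. P (a # vs))"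
  unfolding tuples_def length_Suc_conv by fastforce

lemma finite_tuples: "finite A \<Longrightarrow> finite (tuples A k)"
  unfolding tuples_def using finite_lists_length_eq[of A k] by (simp add: conj_commute)

lemma card_tuples: "finite A \<Longrightarrow> card (tuples A k) = card A ^ k"
  unfolding tuples_def using card_lists_length_eq[of A k] by (simp add: conj_commute)

context
  fixes A :: "'a set" and RI :: "'r \<Rightarrow> 'a list \<Rightarrow> bool" and FI :: "'f \<Rightarrow> 'a list \<Rightarrow> 'a"
    and SI :: "'a list set"
begin

lemma so_sat_imp [simp]:
  "so_sat A RI FI SI e re fe (so_imp p q) \<longleftrightarrow> (so_sat A RI FI SI e re fe p \<longrightarrow> so_sat A RI FI SI e re fe q)"
  by (simp add: so_imp_def)

lemma so_sat_iff [simp]: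
  "so_sat A RI FI SI e re fe (so_iff p q) \<longleftrightarrow> (so_sat A RI FI SI e re fe p \<longleftrightarrow> so_sat A RI FI SI e re fe q)"
  by (auto simp: so_iff_def)

lemma so_sat_or [simp]:
  "so_sat A RI FI SI e re fe (so_or p q) \<longleftrightarrow> so_sat A RI FI SI e re fe p \<or> so_sat A RI FI SI e re fe q"
  by (simp add: so_or_def)

lemma so_sat_conj:
  "A \<noteq> {} \<Longrightarrow> so_sat A RI FI SI e re fe (so_conj ps) \<longleftrightarrow> (\<forall>p\<in>set ps. so_sat A RI FI SI e re fe p)"
  by (induction ps) (auto simp: so_true_def)

lemma so_sat_exs:
  "so_sat A RI FI SI e re fe (so_exs off k p) \<longleftrightarrow>
     (\<exists>vs\<in>tuples A k. so_sat A RI FI SI (env_upds e off vs) re fe p)"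
proof (induction k arbitrary: off e)
  case 0
  then show ?case by (simp add: so_exs.simps tuples_def)
next
  case (Suc k)
  then show ?case by (simp add: so_exs.simps bex_tuples_Suc env_upds_Cons del: fun_upd_apply)
qed

lemma so_sat_alls:
  "so_sat A RI FI SI e re fe (so_alls off k p) \<longleftrightarrow>
     (\<forall>vs\<in>tuples A k. so_sat A RI FI SI (env_upds e off vs) re fe p)"
  by (simp add: so_alls_def so_sat_exs)

lemma so_sat_defines:
  "so_sat A RI FI SI e re fe (so_defines P k p) \<longleftrightarrow>
     (\<forall>vs\<in>tuples A k. vs \<in> re P \<longleftrightarrow> so_sat A RI FI SI (env_upds e 0 vs) re fe p)"
  by (simp add: so_defines_def so_sat_alls tuples_def)

lemma so_sat_SExR_defines:
  assumes "Q0 \<subseteq> tuples A k"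
    and "\<And>vs Q. vs \<in> tuples A k \<Longrightarrow> so_sat A RI FI SI (env_upds e 0 vs) (re(P := Q)) fe p \<longleftrightarrow> vs \<in> Q0"
  shows "so_sat A RI FI SI e re fe (SExR P k (SAnd (so_defines P k p) q)) \<longleftrightarrow>
           so_sat A RI FI SI e (re(P := Q0)) fe q"
proof -
  have "so_sat A RI FI SI e (re(P := Q)) fe (so_defines P k p) \<longleftrightarrow> Q = Q0" if "Q \<subseteq> tuples A k" for Q
    using that assms by (auto simp: so_sat_defines)
  then show ?thesis
    using assms(1) by auto
qed

end

lemma so_wf_imp [simp]:
  "so_wf arR arF n GR GF V (so_imp p q) \<longleftrightarrow> so_wf arR arF n GR GF V p \<and> so_wf arR arF n GR GF V q"
  by (simp add: so_imp_def)

lemma so_wf_iff [simp]: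
  "so_wf arR arF n GR GF V (so_iff p q) \<longleftrightarrow> so_wf arR arF n GR GF V p \<and> so_wf arR arF n GR GF V q"
  by (auto simp: so_iff_def)

lemma so_wf_or [simp]:
  "so_wf arR arF n GR GF V (so_or p q) \<longleftrightarrow> so_wf arR arF n GR GF V p \<and> so_wf arR arF n GR GF V q"
  by (simp add: so_or_def)

lemma so_wf_true [simp]: "so_wf arR arF n GR GF V so_true"
  by (simp add: so_true_def)

lemma so_wf_conj [simp]: "so_wf arR arF n GR GF V (so_conj ps) \<longleftrightarrow> (\<forall>p\<in>set ps. so_wf arR arF n GR GF V p)"
  by (induction ps) auto

lemma so_wf_exs [simp]:
  "so_wf arR arF n GR GF V (so_exs off k p) \<longleftrightarrow> so_wf arR arF n GR GF (V \<union> {off..<off + k}) p"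
proof (induction k arbitrary: off V)
  case 0
  then show ?case by (simp add: so_exs.simps)
next
  case (Suc k)
  have "insert off V \<union> {Suc off..<Suc off + k} = V \<union> {off..<off + Suc k}"
    by auto
  then show ?case by (simp add: so_exs.simps Suc)
qed

lemma so_wf_alls [simp]:
  "so_wf arR arF n GR GF V (so_alls off k p) \<longleftrightarrow> so_wf arR arF n GR GF (V \<union> {off..<off + k}) p"
  by (simp add: so_alls_def)

lemma sotrm_wf_so_vars: "{off..<off + k} \<subseteq> V \<Longrightarrow> \<forall>t\<in>set (so_vars off k). sotrm_wf arF GF V t"
  by (auto simp: so_vars_def)

lemma so_wf_defines [simp]:
  "so_wf arR arF n GR GF V (so_defines P k p) \<longleftrightarrow> GR P = Some k \<and> so_wf arR arF n GR GF (V \<union> {0..<k}) p"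
  using sotrm_wf_so_vars[of 0 k "V \<union> {0..<k}" arF GF] by (auto simp: so_defines_def)

section \<open>Teams as relations\<close>

fun list_pos :: "'a list \<Rightarrow> 'a \<Rightarrow> nat" where
  "list_pos [] y = 0"
| "list_pos (z # zs) y = (if z = y then 0 else Suc (list_pos zs y))"

lemma list_pos: "y \<in> set ys \<Longrightarrow> list_pos ys y < length ys \<and> ys ! list_pos ys y = y"
  by (induction ys) auto

definition asg_tuple :: "nat list \<Rightarrow> (nat \<rightharpoonup> 'a) \<Rightarrow> 'a list" where
  "asg_tuple ys s = map (\<lambda>y. the (s y)) ys"

lemma length_asg_tuple [simp]: "length (asg_tuple ys s) = length ys"
  by (simp add: asg_tuple_def)

lemma team_rel_eq_image: "team_rel ys X = asg_tuple ys ` X"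
  by (simp add: team_rel_def asg_tuple_def)

lemma asg_tuple_in_tuples:
  assumes "is_team A (set ys) X" and "s \<in> X"
  shows "asg_tuple ys s \<in> tuples A (length ys)"
proof -
  have "the (s y) \<in> A" if "y \<in> set ys" for y
  proof -
    have "y \<in> dom s"
      using assms that by (auto simp: is_team_def)
    then obtain b where "s y = Some b"
      by blast
    then have "b \<in> ran s"
      by (auto simp: ran_def)
    with \<open>s y = Some b\<close> show ?thesis
      using assms by (auto simp: is_team_def)
  qed
  then show ?thesis
    by (auto simp: tuples_def asg_tuple_def)
qed

lemma team_rel_subset_tuples: "is_team A (set ys) X \<Longrightarrow> team_rel ys X \<subseteq> tuples A (length ys)"
  by (auto simp: team_rel_eq_image asg_tuple_in_tuples)

lemma inj_on_asg_tuple: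
  assumes "is_team A (set ys) X"
  shows "inj_on (asg_tuple ys) X"
proof (rule inj_onI)
  fix s s' assume "s \<in> X" "s' \<in> X" and eq: "asg_tuple ys s = asg_tuple ys s'"
  then have dom: "dom s = set ys" "dom s' = set ys"
    using assms by (auto simp: is_team_def)
  show "s = s'"
  proof
    fix y
    show "s y = s' y"
    proof (cases "y \<in> set ys")
      case True
      with eq have "the (s y) = the (s' y)"
        by (simp add: asg_tuple_def map_eq_conv)
      with True dom show ?thesis
        by (metis domD option.sel)
    next
      case False
      with dom show ?thesis by (metis domIff)
    qed
  qed
qed

lemma ex_team_rel_Un_iff:
  "(\<exists>Q1 Q2. team_rel ys X = Q1 \<union> Q2 \<and> \<Phi> Q1 Q2) \<longleftrightarrow>
     (\<exists>Y Z. X = Y \<union> Z \<and> \<Phi> (team_rel ys Y) (team_rel ys Z))"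
proof
  assume "\<exists>Q1 Q2. team_rel ys X = Q1 \<union> Q2 \<and> \<Phi> Q1 Q2"
  then obtain Q1 Q2 where rel: "team_rel ys X = Q1 \<union> Q2" and \<Phi>: "\<Phi> Q1 Q2"
    by blast
  define Y where "Y = {s \<in> X. asg_tuple ys s \<in> Q1}"
  define Z where "Z = {s \<in> X. asg_tuple ys s \<in> Q2}"
  have filter: "team_rel ys {s \<in> X. asg_tuple ys s \<in> Q} = team_rel ys X \<inter> Q" for Q
    by (auto simp: team_rel_eq_image)
  have "team_rel ys Y = Q1" "team_rel ys Z = Q2"
    using rel unfolding Y_def Z_def filter by auto
  moreover have "X = Y \<union> Z"
    using rel unfolding Y_def Z_def team_rel_eq_image by auto
  ultimately show "\<exists>Y Z. X = Y \<union> Z \<and> \<Phi> (team_rel ys Y) (team_rel ys Z)"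
    using \<Phi> by metis
next
  assume "\<exists>Y Z. X = Y \<union> Z \<and> \<Phi> (team_rel ys Y) (team_rel ys Z)"
  then show "\<exists>Q1 Q2. team_rel ys X = Q1 \<union> Q2 \<and> \<Phi> Q1 Q2"
    by (metis image_Un team_rel_eq_image)
qed

text \<open>Extending a team by a variable x is recorded in the tuple order x # ys;
  if x already occurs in ys, its old column is overwritten as well.\<close>
definition tuple_upd :: "nat list \<Rightarrow> nat \<Rightarrow> 'a list \<Rightarrow> 'a \<Rightarrow> 'a list" where
  "tuple_upd ys x vs a = a # map2 (\<lambda>y v. if y = x then a else v) ys vs"

lemma asg_tuple_fun_upd: "asg_tuple (x # ys) (s(x \<mapsto> a)) = tuple_upd ys x (asg_tuple ys s) a"
  by (induction ys) (auto simp: asg_tuple_def tuple_upd_def)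

lemma tuple_upd_in_tuples:
  "vs \<in> tuples A (length ys) \<Longrightarrow> a \<in> A \<Longrightarrow> tuple_upd ys x vs a \<in> tuples A (Suc (length ys))"
  by (auto simp: tuples_def tuple_upd_def dest: set_zip_rightD)

lemma ran_fun_upd_subset: "ran (m(a \<mapsto> b)) \<subseteq> insert b (ran m)"
  by (auto simp: ran_def)

lemma is_team_team_sup:
  "is_team A V X \<Longrightarrow> (\<And>s. s \<in> X \<Longrightarrow> F s \<in> A) \<Longrightarrow> is_team A (insert x V) (team_sup X F x)"
  unfolding is_team_def team_sup_def using ran_fun_upd_subset by fastforce

lemma is_team_team_dup: "is_team A V X \<Longrightarrow> is_team A (insert x V) (team_dup X A x)"
  unfolding is_team_def team_dup_def using ran_fun_upd_subset by fastforce

lemma team_rel_team_sup: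
  "team_rel (x # ys) (team_sup X F x) = (\<lambda>s. tuple_upd ys x (asg_tuple ys s) (F s)) ` X"
  by (simp add: team_rel_eq_image team_sup_def image_image asg_tuple_fun_upd)

lemma team_rel_team_dup:
  "team_rel (x # ys) (team_dup X A x) = {tuple_upd ys x vs a | vs a. vs \<in> team_rel ys X \<and> a \<in> A}"
proof -
  have "team_dup X A x = (\<lambda>(s, a). s(x \<mapsto> a)) ` (X \<times> A)"
    by (auto simp: team_dup_def)
  then have "team_rel (x # ys) (team_dup X A x) = (\<lambda>(s, a). tuple_upd ys x (asg_tuple ys s) a) ` (X \<times> A)"
    by (simp add: team_rel_eq_image image_image case_prod_unfold asg_tuple_fun_upd)
  then show ?thesis
    by (auto simp: team_rel_eq_image)
qed

lemma asg_tuple_snoc_in_tuples: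
  "is_team A (set ys) X \<Longrightarrow> s \<in> X \<Longrightarrow> c \<in> A \<Longrightarrow> asg_tuple ys s @ [c] \<in> tuples A (Suc (length ys))"
  using asg_tuple_in_tuples[of A ys X s] by (simp add: tuples_def)

lemma inj_on_asg_tuple_snoc: "is_team A (set ys) X \<Longrightarrow> inj_on (\<lambda>s. asg_tuple ys s @ [c]) X"
  using inj_on_asg_tuple[of A ys X] by (simp add: inj_on_def)

section \<open>Counting Skolem functions\<close>

lemma bij_betw_PiE_restrict_comp:
  assumes "inj_on h X" and "h ` X \<subseteq> D"
  shows "bij_betw (\<lambda>g. (restrict (g \<circ> h) X, restrict g (D - h ` X)))
           (D \<rightarrow>\<^sub>E A) ((X \<rightarrow>\<^sub>E A) \<times> (D - h ` X \<rightarrow>\<^sub>E A))"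
proof (rule bij_betw_byWitness)
  define h' where "h' = the_inv_into X h"
  have h'h: "h' (h s) = s" if "s \<in> X" for s
    using assms(1) that by (simp add: h'_def the_inv_into_f_f)
  have hh': "h (h' d) = d" and h'X: "h' d \<in> X" if "d \<in> h ` X" for d
    using assms(1) that by (auto simp: h'_def f_the_inv_into_f the_inv_into_into)
  let ?merge = "\<lambda>(F, G). \<lambda>d. if d \<in> h ` X then F (h' d) else G d"
  show "\<forall>g \<in> D \<rightarrow>\<^sub>E A. ?merge (restrict (g \<circ> h) X, restrict g (D - h ` X)) = g"
    using hh' h'X assms(2) by (fastforce simp: PiE_def extensional_def)
  show "\<forall>p \<in> (X \<rightarrow>\<^sub>E A) \<times> (D - h ` X \<rightarrow>\<^sub>E A).
      (restrict (?merge p \<circ> h) X, restrict (?merge p) (D - h ` X)) = p"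
    using h'h by (fastforce simp: PiE_def extensional_def)
  show "(\<lambda>g. (restrict (g \<circ> h) X, restrict g (D - h ` X))) ` (D \<rightarrow>\<^sub>E A)
      \<subseteq> (X \<rightarrow>\<^sub>E A) \<times> (D - h ` X \<rightarrow>\<^sub>E A)"
    using assms(2) by (auto simp: PiE_iff)
  show "?merge ` ((X \<rightarrow>\<^sub>E A) \<times> (D - h ` X \<rightarrow>\<^sub>E A)) \<subseteq> D \<rightarrow>\<^sub>E A"
    using h'X assms(2) by (fastforce simp: PiE_def extensional_def)
qed

lemma bij_betw_Collect: "bij_betw f S T \<Longrightarrow> bij_betw f {x \<in> S. P (f x)} {y \<in> T. P y}"
  by (rule bij_betw_subset) (auto simp: bij_betw_def)

lemma card_PiE_restrict_comp:
  assumes "inj_on h X" and "h ` X \<subseteq> D" and "finite D"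
  shows "card {g \<in> D \<rightarrow>\<^sub>E A. \<Phi> (restrict (g \<circ> h) X)} =
           card {F \<in> X \<rightarrow>\<^sub>E A. \<Phi> F} * card A ^ (card D - card X)"
proof -
  have "bij_betw (\<lambda>g. (restrict (g \<circ> h) X, restrict g (D - h ` X)))
      {g \<in> D \<rightarrow>\<^sub>E A. \<Phi> (restrict (g \<circ> h) X)} {p \<in> (X \<rightarrow>\<^sub>E A) \<times> (D - h ` X \<rightarrow>\<^sub>E A). \<Phi> (fst p)}"
    using bij_betw_Collect[OF bij_betw_PiE_restrict_comp[OF assms(1,2)], where P = "\<lambda>p. \<Phi> (fst p)"]
    by simp
  moreover have "{p \<in> (X \<rightarrow>\<^sub>E A) \<times> (D - h ` X \<rightarrow>\<^sub>E A). \<Phi> (fst p)} =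
      {F \<in> X \<rightarrow>\<^sub>E A. \<Phi> F} \<times> (D - h ` X \<rightarrow>\<^sub>E A)"
    by auto
  moreover have "card (D - h ` X) = card D - card X"
    using assms by (simp add: card_Diff_subset finite_subset card_image)
  ultimately show ?thesis
    using assms(3) by (simp add: bij_betw_same_card card_cartesian_product card_funcsetE)
qed

lemma bex_PiE_restrict_comp_iff:
  assumes "inj_on h X" and "h ` X \<subseteq> D" and "A \<noteq> {}"
  shows "(\<exists>g \<in> D \<rightarrow>\<^sub>E A. \<Phi> (restrict (g \<circ> h) X)) \<longleftrightarrow> (\<exists>F \<in> X \<rightarrow>\<^sub>E A. \<Phi> F)"
proof -
  have "(\<lambda>g. (restrict (g \<circ> h) X, restrict g (D - h ` X))) ` (D \<rightarrow>\<^sub>E A) =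
      (X \<rightarrow>\<^sub>E A) \<times> (D - h ` X \<rightarrow>\<^sub>E A)"
    using bij_betw_PiE_restrict_comp[OF assms(1,2)] by (rule bij_betw_imp_surj_on)
  moreover have "D - h ` X \<rightarrow>\<^sub>E A \<noteq> {}"
    using assms(3) by (simp add: PiE_eq_empty_iff)
  ultimately have "fst ` (\<lambda>g. (restrict (g \<circ> h) X, restrict g (D - h ` X))) ` (D \<rightarrow>\<^sub>E A) =
      X \<rightarrow>\<^sub>E A"
    by simp
  then have "(\<lambda>g. restrict (g \<circ> h) X) ` (D \<rightarrow>\<^sub>E A) = X \<rightarrow>\<^sub>E A"
    by (simp add: image_image)
  then show ?thesis
    by (metis (no_types, lifting) bex_imageD image_eqI)
qed

lemma majority_PiE_restrict_comp_iff:
  assumes "inj_on h X" and "h ` X \<subseteq> D" and "finite D" and "finite A" and "A \<noteq> {}"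
  shows "card A ^ card D \<le> 2 * card {g \<in> D \<rightarrow>\<^sub>E A. \<Phi> (restrict (g \<circ> h) X)} \<longleftrightarrow>
           card A ^ card X \<le> 2 * card {F \<in> X \<rightarrow>\<^sub>E A. \<Phi> F}"
proof -
  have "card X \<le> card D"
    using card_mono[OF assms(3,2)] by (simp add: card_image[OF assms(1)])
  then have "card A ^ card D = card A ^ card X * card A ^ (card D - card X)"
    by (simp add: power_add[symmetric])
  moreover have "card A ^ (card D - card X) > 0"
    using assms(4,5) by (simp add: card_gt_0_iff)
  ultimately show ?thesis
    by (simp add: card_PiE_restrict_comp[OF assms(1-3)])
qed

lemma so_sat_SEx_SExF_padded:
  assumes "A \<noteq> {}" and "\<And>c. c \<in> A \<Longrightarrow> inj_on (h c) X \<and> h c ` X \<subseteq> tuples A k"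
    and "\<And>c g. c \<in> A \<Longrightarrow> g \<in> tuples A k \<rightarrow>\<^sub>E A \<Longrightarrow>
      so_sat A RI FI SI (e(v := c)) re (fe(f := g)) p \<longleftrightarrow> \<Phi> (restrict (g \<circ> h c) X)"
  shows "so_sat A RI FI SI e re fe (SEx v (SExF f k p)) \<longleftrightarrow> (\<exists>F \<in> X \<rightarrow>\<^sub>E A. \<Phi> F)"
proof -
  have "so_sat A RI FI SI e re fe (SEx v (SExF f k p)) \<longleftrightarrow>
      (\<exists>c\<in>A. \<exists>g\<in>tuples A k \<rightarrow>\<^sub>E A. \<Phi> (restrict (g \<circ> h c) X))"
    unfolding so_sat.simps by (intro bex_cong refl assms(3))
  also have "\<dots> \<longleftrightarrow> (\<exists>c\<in>A. \<exists>F\<in>X \<rightarrow>\<^sub>E A. \<Phi> F)"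
    using assms(1,2) by (intro bex_cong refl bex_PiE_restrict_comp_iff) auto
  finally show ?thesis
    using assms(1) by (simp add: ex_in_conv)
qed

lemma so_sat_SEx_SMostF_padded:
  assumes "finite A" and "A \<noteq> {}" and "\<And>c. c \<in> A \<Longrightarrow> inj_on (h c) X \<and> h c ` X \<subseteq> tuples A k"
    and "\<And>c g. c \<in> A \<Longrightarrow> g \<in> tuples A k \<rightarrow>\<^sub>E A \<Longrightarrow>
      so_sat A RI FI SI (e(v := c)) re (fe(f := g)) p \<longleftrightarrow> \<Phi> (restrict (g \<circ> h c) X)"
  shows "so_sat A RI FI SI e re fe (SEx v (SMostF f k p)) \<longleftrightarrow>
           card A ^ card X \<le> 2 * card {F \<in> X \<rightarrow>\<^sub>E A. \<Phi> F}"
proof -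
  have "{g \<in> tuples A k \<rightarrow>\<^sub>E A. so_sat A RI FI SI (e(v := c)) re (fe(f := g)) p} =
      {g \<in> tuples A k \<rightarrow>\<^sub>E A. \<Phi> (restrict (g \<circ> h c) X)}" if "c \<in> A" for c
    using that by (intro Collect_cong conj_cong refl assms(4))
  then have "so_sat A RI FI SI e re fe (SEx v (SMostF f k p)) \<longleftrightarrow>
      (\<exists>c\<in>A. card A ^ card (tuples A k) \<le> 2 * card {g \<in> tuples A k \<rightarrow>\<^sub>E A. \<Phi> (restrict (g \<circ> h c) X)})"
    unfolding so_sat.simps card_tuples[OF assms(1)] by (intro bex_cong refl) simp
  also have "\<dots> \<longleftrightarrow> (\<exists>c\<in>A. card A ^ card X \<le> 2 * card {F \<in> X \<rightarrow>\<^sub>E A. \<Phi> F})"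
    using assms(1-3) by (intro bex_cong refl majority_PiE_restrict_comp_iff finite_tuples) auto
  finally show ?thesis
    using assms(2) by (simp add: ex_in_conv)
qed

section \<open>The translation\<close>

fun so_trm :: "nat list \<Rightarrow> nat \<Rightarrow> 'f trm \<Rightarrow> 'f sotrm" where
  "so_trm ys off (Var y) = SVar (off + list_pos ys y)"
| "so_trm ys off (Fun f ts) = SFun f (map (so_trm ys off) ts)"

lemma sotrm_eval_so_trm:
  assumes "trm_vars t \<subseteq> set ys" and "\<And>i. i < length ys \<Longrightarrow> e (off + i) = asg_tuple ys s ! i"
  shows "sotrm_eval FI e fe (so_trm ys off t) = trm_eval FI s t"
  using assms(1)
proof (induction t)
  case (Var y)
  then show ?case
    using list_pos[of y ys] assms(2)[of "list_pos ys y"] by (simp add: asg_tuple_def)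
next
  case (Fun f ts)
  then have "sotrm_eval FI e fe (so_trm ys off t) = trm_eval FI s t" if "t \<in> set ts" for t
    using that by auto
  then show ?case
    by (simp cong: map_cong)
qed

lemma sotrm_eval_so_trm_env_upds [simp]:
  "trm_vars t \<subseteq> set ys \<Longrightarrow>
     sotrm_eval FI (env_upds e off (asg_tuple ys s)) fe (so_trm ys off t) = trm_eval FI s t"
  by (rule sotrm_eval_so_trm) simp_all

lemma map_sotrm_eval_so_trm:
  "\<Union> (trm_vars ` set ts) \<subseteq> set ys \<Longrightarrow>
     map (sotrm_eval FI (env_upds e off (asg_tuple ys s)) fe \<circ> so_trm ys off) ts = map (trm_eval FI s) ts"
  by (auto simp: map_eq_conv UN_subset_iff)

lemma sotrm_wf_so_trm:
  "trm_wf arF t \<Longrightarrow> trm_vars t \<subseteq> set ys \<Longrightarrow> {off..<off + length ys} \<subseteq> V \<Longrightarrow>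
     sotrm_wf arF GF V (so_trm ys off t)"
proof (induction t)
  case (Var y)
  then show ?case
    using list_pos[of y ys] by (auto simp: subset_iff)
qed auto

definition so_forall_team :: "nat \<Rightarrow> nat \<Rightarrow> nat \<Rightarrow> ('r, 'f) so \<Rightarrow> ('r, 'f) so" where
  "so_forall_team P off k p = so_alls off k (so_imp (SRVar P (so_vars off k)) p)"

lemma so_sat_forall_team:
  assumes "is_team A (set ys) X" and "re P = team_rel ys X"
  shows "so_sat A RI FI SI e re fe (so_forall_team P off (length ys) p) \<longleftrightarrow>
           (\<forall>s\<in>X. so_sat A RI FI SI (env_upds e off (asg_tuple ys s)) re fe p)"
  using assms team_rel_subset_tuples[OF assms(1)]
  by (auto simp: so_forall_team_def so_sat_alls tuples_def team_rel_eq_image)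

lemma so_wf_forall_team:
  "GR P = Some k \<Longrightarrow> so_wf arR arF n GR GF (V \<union> {off..<off + k}) p \<Longrightarrow>
     so_wf arR arF n GR GF V (so_forall_team P off k p)"
  using sotrm_wf_so_vars[of off k "V \<union> {off..<off + k}" arF GF] by (simp add: so_forall_team_def)

definition tr_dep :: "nat \<Rightarrow> nat list \<Rightarrow> 'f trm list \<Rightarrow> ('r, 'f) so" where
  "tr_dep P ys ts =
     so_forall_team P 0 (length ys) (so_forall_team P (length ys) (length ys)
       (so_imp (so_conj (map (\<lambda>t. SEq (so_trm ys 0 t) (so_trm ys (length ys) t)) (butlast ts)))
          (SEq (so_trm ys 0 (last ts)) (so_trm ys (length ys) (last ts)))))"

lemma so_sat_tr_dep:
  assumes "A \<noteq> {}" and "is_team A (set ys) X" and "re P = team_rel ys X"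
    and "ts \<noteq> []" and "\<forall>t\<in>set ts. trm_vars t \<subseteq> set ys"
  shows "so_sat A RI FI SI e re fe (tr_dep P ys ts) \<longleftrightarrow>
    (\<forall>s\<in>X. \<forall>s'\<in>X. map (trm_eval FI s) (butlast ts) = map (trm_eval FI s') (butlast ts) \<longrightarrow>
        trm_eval FI s (last ts) = trm_eval FI s' (last ts))"
proof -
  have eval: "sotrm_eval FI (env_upds (env_upds e 0 (asg_tuple ys s)) (length ys) (asg_tuple ys s')) fe
      (so_trm ys 0 t) = trm_eval FI s t"
    if "t \<in> set ts" for s s' t
    using assms(5) that by (intro sotrm_eval_so_trm) (auto simp: env_upds_def)
  have "last ts \<in> set ts"
    using assms(4) by simp
  then show ?thesis
    using assms(5)
    by (simp add: tr_dep_def so_sat_forall_team[where re = re and P = P, OF assms(2,3)] so_sat_conj[OF assms(1)] eval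
        map_eq_conv in_set_butlastD)
qed

lemma so_wf_tr_dep:
  assumes "GR P = Some (length ys)" and "\<forall>t\<in>set ts. trm_wf arF t \<and> trm_vars t \<subseteq> set ys" and "ts \<noteq> []"
  shows "so_wf arR arF n GR GF V (tr_dep P ys ts)"
proof -
  let ?V = "V \<union> {0..<length ys} \<union> {length ys..<length ys + length ys}"
  have wf: "sotrm_wf arF GF ?V (so_trm ys 0 t)" "sotrm_wf arF GF ?V (so_trm ys (length ys) t)"
    if "t \<in> set ts" for t
    using assms(2) that by (auto intro!: sotrm_wf_so_trm)
  have "last ts \<in> set ts"
    using assms(3) by simp
  then show ?thesis
    using assms(1) by (auto simp: tr_dep_def intro!: so_wf_forall_team wf dest: in_set_butlastD)
qed

definition tr_or :: "nat \<Rightarrow> nat \<Rightarrow> ('r, 'f) so \<Rightarrow> ('r, 'f) so \<Rightarrow> ('r, 'f) so" where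
  "tr_or P k p q = SExR (Suc P) k (SExR (Suc (Suc P)) k (SAnd
     (so_defines P k (so_or (SRVar (Suc P) (so_vars 0 k)) (SRVar (Suc (Suc P)) (so_vars 0 k))))
     (SAnd p q)))"

lemma so_sat_tr_or:
  assumes "re P \<subseteq> tuples A k"
  shows "so_sat A RI FI SI e re fe (tr_or P k p q) \<longleftrightarrow>
    (\<exists>Q1 Q2. re P = Q1 \<union> Q2 \<and> so_sat A RI FI SI e (re(Suc P := Q1, Suc (Suc P) := Q2)) fe p \<and>
       so_sat A RI FI SI e (re(Suc P := Q1, Suc (Suc P) := Q2)) fe q)"
proof -
  let ?T = "tuples A k"
  have union: "(\<forall>vs\<in>?T. vs \<in> re P \<longleftrightarrow> vs \<in> Q1 \<or> vs \<in> Q2) \<and> Q1 \<subseteq> ?T \<and> Q2 \<subseteq> ?T \<longleftrightarrow>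
      re P = Q1 \<union> Q2" for Q1 Q2
    using assms by blast
  have "so_sat A RI FI SI e re fe (tr_or P k p q) \<longleftrightarrow>
    (\<exists>Q1 Q2. ((\<forall>vs\<in>?T. vs \<in> re P \<longleftrightarrow> vs \<in> Q1 \<or> vs \<in> Q2) \<and> Q1 \<subseteq> ?T \<and> Q2 \<subseteq> ?T) \<and>
       so_sat A RI FI SI e (re(Suc P := Q1, Suc (Suc P) := Q2)) fe p \<and>
       so_sat A RI FI SI e (re(Suc P := Q1, Suc (Suc P) := Q2)) fe q)"
    unfolding tr_or_def by (auto simp: so_sat_defines tuples_def)
  then show ?thesis
    unfolding union .
qed

lemma so_sat_tr_or_team:
  assumes "is_team A (set ys) X" and "re P = team_rel ys X"
    and p: "\<And>Y re'. is_team A (set ys) Y \<Longrightarrow> re' (Suc P) = team_rel ys Y \<Longrightarrow>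
      so_sat A RI FI SI e re' fe p' \<longleftrightarrow> dm_sat A RI FI Y p"
    and q: "\<And>Z re'. is_team A (set ys) Z \<Longrightarrow> re' (Suc (Suc P)) = team_rel ys Z \<Longrightarrow>
      so_sat A RI FI SI e re' fe q' \<longleftrightarrow> dm_sat A RI FI Z q"
  shows "so_sat A RI FI SI e re fe (tr_or P (length ys) p' q') \<longleftrightarrow> dm_sat A RI FI X (DOr p q)"
proof -
  let ?re = "\<lambda>Y Z. re(Suc P := team_rel ys Y, Suc (Suc P) := team_rel ys Z)"
  have "X = Y \<union> Z \<and> so_sat A RI FI SI e (?re Y Z) fe p' \<and> so_sat A RI FI SI e (?re Y Z) fe q' \<longleftrightarrow>
      X = Y \<union> Z \<and> dm_sat A RI FI Y p \<and> dm_sat A RI FI Z q" for Y Z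
  proof (cases "X = Y \<union> Z")
    case True
    then have "is_team A (set ys) Y" "is_team A (set ys) Z"
      using assms(1) by (auto simp: is_team_def)
    then show ?thesis
      by (simp add: p q)
  qed simp
  then show ?thesis
    using team_rel_subset_tuples[OF assms(1)]
    by (simp only: assms(2) so_sat_tr_or ex_team_rel_Un_iff dm_sat.simps)
qed

definition so_upd_eqs :: "nat list \<Rightarrow> nat \<Rightarrow> ('r, 'f) so" where
  "so_upd_eqs ys x = so_conj (SEq (SVar 0) (SVar (Suc (length ys))) #
     map (\<lambda>i. SEq (SVar (Suc i)) (SVar (if ys ! i = x then Suc (length ys) else length ys + 2 + i)))
       [0..<length ys])"

lemma so_sat_upd_eqs:
  assumes "A \<noteq> {}" and "length ws = Suc (length ys)" and "length vs = length ys"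
  shows "so_sat A RI FI SI (env_upds e 0 (ws @ a # vs)) re fe (so_upd_eqs ys x) \<longleftrightarrow>
           ws = tuple_upd ys x vs a"
proof -
  obtain w ws' where ws: "ws = w # ws'" and len: "length ws' = length ys"
    using assms(2) by (cases ws) auto
  have "so_sat A RI FI SI (env_upds e 0 (ws @ a # vs)) re fe (so_upd_eqs ys x) \<longleftrightarrow>
      w = a \<and> (\<forall>i<length ys. ws' ! i = (if ys ! i = x then a else vs ! i))"
    using len assms(3)
    by (auto simp: so_upd_eqs_def so_sat_conj[OF assms(1)] ws env_upds_def nth_append)
  also have "\<dots> \<longleftrightarrow> w = a \<and> ws' = map2 (\<lambda>y v. if y = x then a else v) ys vs"
    using len assms(3) by (simp add: list_eq_iff_nth_eq)
  also have "\<dots> \<longleftrightarrow> ws = tuple_upd ys x vs a"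
    by (simp add: ws tuple_upd_def)
  finally show ?thesis .
qed

lemma so_wf_upd_eqs: "{0..<2 * length ys + 2} \<subseteq> V \<Longrightarrow> so_wf arR arF n GR GF V (so_upd_eqs ys x)"
  by (auto simp: so_upd_eqs_def)

text \<open>Variable layout: the new tuple occupies 0..n, the new value a sits at n+1 and the old
  tuple at n+2..2n+1, where n is the length of ys. The filter \<alpha> restricts the admissible
  values a.\<close>
definition tr_ext :: "nat \<Rightarrow> nat list \<Rightarrow> nat \<Rightarrow> ('r, 'f) so \<Rightarrow> ('r, 'f) so \<Rightarrow> ('r, 'f) so" where
  "tr_ext P ys x \<alpha> body = SExR (Suc P) (Suc (length ys)) (SAnd
     (so_defines (Suc P) (Suc (length ys)) (so_exs (Suc (length ys)) (Suc (length ys))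
        (SAnd (SRVar P (so_vars (length ys + 2) (length ys))) (SAnd \<alpha> (so_upd_eqs ys x)))))
     body)"

lemma so_sat_tr_ext:
  assumes "A \<noteq> {}" and "is_team A (set ys) X" and "re P = team_rel ys X"
    and filter: "\<And>ws a vs re'. length ws = Suc (length ys) \<Longrightarrow> a \<in> A \<Longrightarrow> vs \<in> tuples A (length ys) \<Longrightarrow>
      so_sat A RI FI SI (env_upds e 0 (ws @ a # vs)) re' fe \<alpha> \<longleftrightarrow> Val vs a"
  shows "so_sat A RI FI SI e re fe (tr_ext P ys x \<alpha> body) \<longleftrightarrow>
    so_sat A RI FI SI e
      (re(Suc P := {tuple_upd ys x vs a | vs a. vs \<in> team_rel ys X \<and> a \<in> A \<and> Val vs a})) fe body"
  unfolding tr_ext_def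
proof (rule so_sat_SExR_defines)
  let ?n = "length ys"
  show "{tuple_upd ys x vs a | vs a. vs \<in> team_rel ys X \<and> a \<in> A \<and> Val vs a} \<subseteq> tuples A (Suc ?n)"
    using team_rel_subset_tuples[OF assms(2)] by (auto intro: tuple_upd_in_tuples)
  fix ws Q
  assume "ws \<in> tuples A (Suc ?n)"
  then have len: "length ws = Suc ?n"
    by (simp add: tuples_def)
  have step: "so_sat A RI FI SI (env_upds e 0 (ws @ a # vs)) (re(Suc P := Q)) fe
      (SAnd (SRVar P (so_vars (?n + 2) ?n)) (SAnd \<alpha> (so_upd_eqs ys x))) \<longleftrightarrow>
    vs \<in> re P \<and> Val vs a \<and> ws = tuple_upd ys x vs a"
    if "a \<in> A" "vs \<in> tuples A ?n" for a vs
  proof -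
    have "length vs = ?n"
      using that by (simp add: tuples_def)
    then have "map (sotrm_eval FI (env_upds e 0 ((ws @ [a]) @ vs)) fe) (so_vars (?n + 2) ?n) = vs"
      using map_eval_so_vars_append[of vs ?n FI e "ws @ [a]" fe] len by simp
    then show ?thesis
      using len \<open>length vs = ?n\<close> by (simp add: filter that so_sat_upd_eqs[OF assms(1)])
  qed
  have "so_sat A RI FI SI (env_upds e 0 ws) (re(Suc P := Q)) fe
      (so_exs (Suc ?n) (Suc ?n) (SAnd (SRVar P (so_vars (?n + 2) ?n)) (SAnd \<alpha> (so_upd_eqs ys x)))) \<longleftrightarrow>
    (\<exists>a\<in>A. \<exists>vs\<in>tuples A ?n. vs \<in> re P \<and> Val vs a \<and> ws = tuple_upd ys x vs a)"
    unfolding so_sat_exs bex_tuples_Suc env_upds_append[OF len] by (intro bex_cong refl step)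
  also have "\<dots> \<longleftrightarrow> ws \<in> {tuple_upd ys x vs a | vs a. vs \<in> team_rel ys X \<and> a \<in> A \<and> Val vs a}"
    using team_rel_subset_tuples[OF assms(2)] by (auto simp: assms(3))
  finally show "so_sat A RI FI SI (env_upds e 0 ws) (re(Suc P := Q)) fe
      (so_exs (Suc ?n) (Suc ?n) (SAnd (SRVar P (so_vars (?n + 2) ?n)) (SAnd \<alpha> (so_upd_eqs ys x)))) \<longleftrightarrow>
    ws \<in> {tuple_upd ys x vs a | vs a. vs \<in> team_rel ys X \<and> a \<in> A \<and> Val vs a}" .
qed

lemma so_wf_tr_ext:
  assumes "GR P = Some (length ys)"
    and "so_wf arR arF n (GR(Suc P \<mapsto> Suc (length ys))) GF (V \<union> {0..<2 * length ys + 2}) \<alpha>"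
    and "so_wf arR arF n (GR(Suc P \<mapsto> Suc (length ys))) GF V body"
  shows "so_wf arR arF n GR GF V (tr_ext P ys x \<alpha> body)"
proof -
  let ?GR = "GR(Suc P \<mapsto> Suc (length ys))" and ?W = "V \<union> {0..<2 * length ys + 2}"
  have W: "V \<union> {0..<Suc (length ys)} \<union> {Suc (length ys)..<Suc (length ys) + Suc (length ys)} = ?W"
    by auto
  have "{length ys + 2..<length ys + 2 + length ys} \<subseteq> ?W"
    by auto
  then have "\<forall>t\<in>set (so_vars (length ys + 2) (length ys)). sotrm_wf arF GF ?W t"
    by (rule sotrm_wf_so_vars)
  then have "so_wf arR arF n ?GR GF ?W
      (SAnd (SRVar P (so_vars (length ys + 2) (length ys))) (SAnd \<alpha> (so_upd_eqs ys x)))"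
    using assms(1,2) by (simp add: so_wf_upd_eqs)
  then show ?thesis
    using assms(3) unfolding tr_ext_def so_wf.simps so_wf_defines so_wf_exs W by simp
qed

definition tr_dup :: "nat \<Rightarrow> nat list \<Rightarrow> nat \<Rightarrow> ('r, 'f) so \<Rightarrow> ('r, 'f) so" where
  "tr_dup P ys x body = tr_ext P ys x so_true body"

lemma so_sat_tr_dup:
  assumes "A \<noteq> {}" and "is_team A (set ys) X" and "re P = team_rel ys X"
  shows "so_sat A RI FI SI e re fe (tr_dup P ys x body) \<longleftrightarrow>
    so_sat A RI FI SI e (re(Suc P := team_rel (x # ys) (team_dup X A x))) fe body"
proof -
  have "so_sat A RI FI SI e re fe (tr_dup P ys x body) \<longleftrightarrow>
    so_sat A RI FI SI e (re(Suc P := {tuple_upd ys x vs a | vs a. vs \<in> team_rel ys X \<and> a \<in> A \<and> True}))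
      fe body"
    unfolding tr_dup_def using assms(1)
    by (intro so_sat_tr_ext[where re = re and P = P, OF assms]) (auto simp: so_true_def)
  then show ?thesis
    by (simp add: team_rel_team_dup)
qed

lemma so_wf_tr_dup:
  "GR P = Some (length ys) \<Longrightarrow> so_wf arR arF n (GR(Suc P \<mapsto> Suc (length ys))) GF V body \<Longrightarrow>
     so_wf arR arF n GR GF V (tr_dup P ys x body)"
  unfolding tr_dup_def by (rule so_wf_tr_ext) simp_all

definition tr_sup :: "nat \<Rightarrow> nat list \<Rightarrow> nat \<Rightarrow> ('r, 'f) so \<Rightarrow> ('r, 'f) so" where
  "tr_sup P ys x body = tr_ext P ys x
     (SEq (SVar (Suc (length ys)))
        (SFVar 0 (so_vars (length ys + 2) (length ys) @ [SVar (2 * length ys + 2)])))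
     body"

lemma so_wf_tr_sup:
  assumes "GR P = Some (length ys)" and "GF 0 = Some (Suc (length ys))" and "2 * length ys + 2 \<in> V"
    and "so_wf arR arF n (GR(Suc P \<mapsto> Suc (length ys))) GF V body"
  shows "so_wf arR arF n GR GF V (tr_sup P ys x body)"
  unfolding tr_sup_def
proof (rule so_wf_tr_ext[OF assms(1) _ assms(4)])
  have "{length ys + 2..<length ys + 2 + length ys} \<subseteq> V \<union> {0..<2 * length ys + 2}"
    by auto
  then have "\<forall>t\<in>set (so_vars (length ys + 2) (length ys)). sotrm_wf arF GF (V \<union> {0..<2 * length ys + 2}) t"
    by (rule sotrm_wf_so_vars)
  then show "so_wf arR arF n (GR(Suc P \<mapsto> Suc (length ys))) GF (V \<union> {0..<2 * length ys + 2})
      (SEq (SVar (Suc (length ys)))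
        (SFVar 0 (so_vars (length ys + 2) (length ys) @ [SVar (2 * length ys + 2)])))"
    using assms(2,3) by simp
qed

lemma so_sat_tr_sup:
  assumes "A \<noteq> {}" and "is_team A (set ys) X" and "re P = team_rel ys X"
    and "g \<in> tuples A (Suc (length ys)) \<rightarrow>\<^sub>E A" and "c \<in> A"
    and body_correct: "\<And>X' re'. is_team A (set (x # ys)) X' \<Longrightarrow> re' (Suc P) = team_rel (x # ys) X' \<Longrightarrow>
      so_sat A RI FI SI (e(2 * length ys + 2 := c)) re' (fe(0 := g)) body \<longleftrightarrow> dm_sat A RI FI X' p"
  shows "so_sat A RI FI SI (e(2 * length ys + 2 := c)) re (fe(0 := g)) (tr_sup P ys x body) \<longleftrightarrow>
    dm_sat A RI FI (team_sup X (restrict (g \<circ> (\<lambda>s. asg_tuple ys s @ [c])) X) x) p"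
proof -
  let ?n = "length ys" and ?e = "e(2 * length ys + 2 := c)"
  let ?X' = "team_sup X (restrict (g \<circ> (\<lambda>s. asg_tuple ys s @ [c])) X) x"
  have g_in_A: "g (asg_tuple ys s @ [c]) \<in> A" if "s \<in> X" for s
    using assms(4) asg_tuple_snoc_in_tuples[OF assms(2) that assms(5)] by (rule PiE_mem)
  have "so_sat A RI FI SI (env_upds ?e 0 (ws @ a # vs)) re' (fe(0 := g))
      (SEq (SVar (Suc ?n)) (SFVar 0 (so_vars (?n + 2) ?n @ [SVar (2 * ?n + 2)]))) \<longleftrightarrow> a = g (vs @ [c])"
    if "length ws = Suc ?n" "vs \<in> tuples A ?n" for ws a vs re'
  proof -
    have "length vs = ?n"
      using that(2) by (simp add: tuples_def)
    then have "map (sotrm_eval FI (env_upds ?e 0 ((ws @ [a]) @ vs)) (fe(0 := g))) (so_vars (?n + 2) ?n) = vs"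
      using map_eval_so_vars_append[of vs ?n FI ?e "ws @ [a]"] that(1) by simp
    moreover have "env_upds ?e 0 (ws @ a # vs) (Suc ?n) = a" "env_upds ?e 0 (ws @ a # vs) (2 * ?n + 2) = c"
      using that(1) \<open>length vs = ?n\<close> by (simp_all add: env_upds_def nth_append)
    ultimately show ?thesis
      by simp
  qed
  then have "so_sat A RI FI SI ?e re (fe(0 := g)) (tr_sup P ys x body) \<longleftrightarrow>
    so_sat A RI FI SI ?e (re(Suc P :=
      {tuple_upd ys x vs a | vs a. vs \<in> team_rel ys X \<and> a \<in> A \<and> a = g (vs @ [c])})) (fe(0 := g)) body"
    unfolding tr_sup_def by (intro so_sat_tr_ext[where re = re and P = P, OF assms(1-3)])
  also have "{tuple_upd ys x vs a | vs a. vs \<in> team_rel ys X \<and> a \<in> A \<and> a = g (vs @ [c])} =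
      team_rel (x # ys) ?X'"
    unfolding team_rel_team_sup using g_in_A by (auto simp: team_rel_eq_image)
  also have "so_sat A RI FI SI ?e (re(Suc P := team_rel (x # ys) ?X')) (fe(0 := g)) body \<longleftrightarrow>
      dm_sat A RI FI ?X' p"
    using g_in_A is_team_team_sup[OF assms(2)] by (intro body_correct) auto
  finally show ?thesis .
qed

text \<open>The Skolem
  function is the function variable 0, and its padding constant c is the first-order variable
  2n+2, just above the variables used by tr_ext.\<close>
fun dm_to_so :: "('r, 'f) dm \<Rightarrow> nat list \<Rightarrow> nat \<Rightarrow> ('r, 'f) so" where
  "dm_to_so (DEq t u) ys P = so_forall_team P 0 (length ys) (SEq (so_trm ys 0 t) (so_trm ys 0 u))"
| "dm_to_so (DNEq t u) ys P =
     so_forall_team P 0 (length ys) (SNot (SEq (so_trm ys 0 t) (so_trm ys 0 u)))"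
| "dm_to_so (DRel R ts) ys P = so_forall_team P 0 (length ys) (SRel R (map (so_trm ys 0) ts))"
| "dm_to_so (DNRel R ts) ys P =
     so_forall_team P 0 (length ys) (SNot (SRel R (map (so_trm ys 0) ts)))"
| "dm_to_so (DDep ts) ys P = (if ts = [] then so_true else tr_dep P ys ts)"
| "dm_to_so (DNDep ts) ys P = SNot (so_exs 0 (length ys) (SRVar P (so_vars 0 (length ys))))"
| "dm_to_so (DAnd p q) ys P = SAnd (dm_to_so p ys P) (dm_to_so q ys P)"
| "dm_to_so (DOr p q) ys P =
     tr_or P (length ys) (dm_to_so p ys (Suc P)) (dm_to_so q ys (Suc (Suc P)))"
| "dm_to_so (DEx x p) ys P = SEx (2 * length ys + 2)
     (SExF 0 (Suc (length ys)) (tr_sup P ys x (dm_to_so p (x # ys) (Suc P))))"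
| "dm_to_so (DAll x p) ys P = tr_dup P ys x (dm_to_so p (x # ys) (Suc P))"
| "dm_to_so (DMost x p) ys P = SEx (2 * length ys + 2)
     (SMostF 0 (Suc (length ys)) (tr_sup P ys x (dm_to_so p (x # ys) (Suc P))))"

lemma so_wf_dm_to_so:
  "dm_wf arR arF \<phi> \<Longrightarrow> dm_fr \<phi> \<subseteq> set ys \<Longrightarrow> GR P = Some (length ys) \<Longrightarrow>
     so_wf arR arF n GR GF V (dm_to_so \<phi> ys P)"
proof (induction \<phi> arbitrary: ys P GR GF V)
  case (DDep ts)
  then show ?case
    by (auto intro: so_wf_tr_dep)
next
  case (DNDep ts)
  then show ?case
    using sotrm_wf_so_vars[of 0 "length ys" "V \<union> {0..<length ys}" arF GF] by simp
next
  case (DOr p q)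
  then show ?case
    using sotrm_wf_so_vars[of 0 "length ys" "V \<union> {0..<length ys}" arF GF] by (simp add: tr_or_def)
next
  case (DEx x p)
  then have "so_wf arR arF n (GR(Suc P \<mapsto> Suc (length ys))) (GF(0 \<mapsto> Suc (length ys)))
      (insert (2 * length ys + 2) V) (dm_to_so p (x # ys) (Suc P))"
    by (intro DEx.IH) auto
  then show ?case
    using DEx.prems by (auto intro: so_wf_tr_sup)
next
  case (DAll x p)
  then have "so_wf arR arF n (GR(Suc P \<mapsto> Suc (length ys))) GF V (dm_to_so p (x # ys) (Suc P))"
    by (intro DAll.IH) auto
  then show ?case
    using DAll.prems by (auto intro: so_wf_tr_dup)
next
  case (DMost x p)
  then have "so_wf arR arF n (GR(Suc P \<mapsto> Suc (length ys))) (GF(0 \<mapsto> Suc (length ys)))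
      (insert (2 * length ys + 2) V) (dm_to_so p (x # ys) (Suc P))"
    by (intro DMost.IH) auto
  then show ?case
    using DMost.prems by (auto intro: so_wf_tr_sup)
qed (fastforce simp: UN_subset_iff intro!: so_wf_forall_team sotrm_wf_so_trm)+

lemma so_sat_dm_to_so:
  assumes "finite A" and "A \<noteq> {}"
  shows "dm_fr \<phi> \<subseteq> set ys \<Longrightarrow> is_team A (set ys) X \<Longrightarrow> re P = team_rel ys X \<Longrightarrow>
    so_sat A RI FI SI e re fe (dm_to_so \<phi> ys P) \<longleftrightarrow> dm_sat A RI FI X \<phi>"
proof (induction \<phi> arbitrary: ys P X e re fe)
  case (DRel R ts)
  then show ?case
    by (simp add: so_sat_forall_team map_sotrm_eval_so_trm)
next
  case (DNRel R ts)
  then show ?case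
    by (simp add: so_sat_forall_team map_sotrm_eval_so_trm)
next
  case (DDep ts)
  show ?case
  proof (cases "ts = []")
    case True
    then show ?thesis
      using assms(2) by (auto simp: so_true_def)
  next
    case False
    then show ?thesis
      using DDep.prems so_sat_tr_dep[where re = re and P = P, OF assms(2) DDep.prems(2,3) False]
      by (simp add: UN_subset_iff)
  qed
next
  case (DNDep ts)
  have "so_sat A RI FI SI e re fe (dm_to_so (DNDep ts) ys P) \<longleftrightarrow>
      \<not> (\<exists>vs\<in>tuples A (length ys). vs \<in> team_rel ys X)"
    by (simp add: so_sat_exs DNDep.prems(3) tuples_def)
  also have "\<dots> \<longleftrightarrow> X = {}"
    using team_rel_subset_tuples[OF DNDep.prems(2)] by (auto simp: team_rel_eq_image)
  finally show ?case
    by simp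
next
  case (DOr p q)
  then show ?case
    unfolding dm_to_so.simps by (intro so_sat_tr_or_team DOr.IH) auto
next
  case (DEx x p)
  have "so_sat A RI FI SI e re fe (dm_to_so (DEx x p) ys P) \<longleftrightarrow>
      (\<exists>F\<in>X \<rightarrow>\<^sub>E A. dm_sat A RI FI (team_sup X F x) p)"
    unfolding dm_to_so.simps using DEx.prems
    by (intro so_sat_SEx_SExF_padded[where h = "\<lambda>c s. asg_tuple ys s @ [c]", OF assms(2)]
        so_sat_tr_sup[OF assms(2)] DEx.IH)
      (auto simp: inj_on_asg_tuple_snoc asg_tuple_snoc_in_tuples)
  then show ?case
    by simp
next
  case (DAll x p)
  have "so_sat A RI FI SI e re fe (dm_to_so (DAll x p) ys P) \<longleftrightarrow>
      so_sat A RI FI SI e (re(Suc P := team_rel (x # ys) (team_dup X A x))) fe (dm_to_so p (x # ys) (Suc P))"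
    unfolding dm_to_so.simps by (rule so_sat_tr_dup) (use assms(2) DAll.prems in auto)
  also have "\<dots> \<longleftrightarrow> dm_sat A RI FI X (DAll x p)"
    unfolding dm_sat.simps
    by (rule DAll.IH) (use DAll.prems is_team_team_dup[OF DAll.prems(2)] in auto)
  finally show ?case .
next
  case (DMost x p)
  have "so_sat A RI FI SI e re fe (dm_to_so (DMost x p) ys P) \<longleftrightarrow>
      card A ^ card X \<le> 2 * card {F \<in> X \<rightarrow>\<^sub>E A. dm_sat A RI FI (team_sup X F x) p}"
    unfolding dm_to_so.simps using DMost.prems
    by (intro so_sat_SEx_SMostF_padded[where h = "\<lambda>c s. asg_tuple ys s @ [c]", OF assms]
        so_sat_tr_sup[OF assms(2)] DMost.IH)
      (auto simp: inj_on_asg_tuple_snoc asg_tuple_snoc_in_tuples)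
  then show ?case
    by simp
qed (simp_all add: so_sat_forall_team)

theorem mainTheorem9:
  fixes arR :: "'r \<Rightarrow> nat" and arF :: "'f \<Rightarrow> nat"
    and \<phi> :: "('r, 'f) dm" and ys :: "nat list"
  assumes "dm_wf arR arF \<phi>" and "distinct ys" and "set ys = dm_fr \<phi>"
  shows "\<exists>\<psi>. so_sentence arR arF (length ys) \<psi> \<and>
     (\<forall>(A :: nat set) RI FI X. is_structure arF A FI \<and> is_team A (dm_fr \<phi>) X \<longrightarrow>
        (dm_sat A RI FI X \<phi> \<longleftrightarrow> so_models A RI FI (team_rel ys X) \<psi>))"
proof -
  define n where "n = length ys"
  define \<psi> :: "('r, 'f) so" where
    "\<psi> = SExR 0 n (SAnd (so_defines 0 n (SS (so_vars 0 n))) (dm_to_so \<phi> ys 0))"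
  have "so_sentence arR arF n \<psi>"
    using so_wf_dm_to_so[OF assms(1), of ys "[0 \<mapsto> n]"] sotrm_wf_so_vars[of 0 n "{0..<n}" arF Map.empty]
      assms(3)
    by (simp add: so_sentence_def \<psi>_def n_def)
  moreover have "dm_sat A RI FI X \<phi> \<longleftrightarrow> so_models A RI FI (team_rel ys X) \<psi>"
    if "is_structure arF A FI" and "is_team A (dm_fr \<phi>) X" for A :: "nat set" and RI FI X
  proof -
    have A: "finite A" "A \<noteq> {}"
      using that(1) by (auto simp: is_structure_def)
    have team: "is_team A (set ys) X"
      using that(2) assms(3) by simp
    have "so_models A RI FI (team_rel ys X) \<psi> \<longleftrightarrow> so_sat A RI FI (team_rel ys X) (\<lambda>_. undefined)
        ((\<lambda>_. {})(0 := team_rel ys X)) (\<lambda>_ _. undefined) (dm_to_so \<phi> ys 0)"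
      unfolding so_models_def \<psi>_def n_def using team_rel_subset_tuples[OF team]
      by (intro so_sat_SExR_defines) (auto simp: tuples_def)
    also have "\<dots> \<longleftrightarrow> dm_sat A RI FI X \<phi>"
      using assms(3) team by (intro so_sat_dm_to_so[OF A]) auto
    finally show ?thesis
      by simp
  qed
  ultimately show ?thesis
    unfolding n_def by blast
qed

end
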